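(* Let $n, r, d$ be positive integers with $n\geqslant r+1$. Then $m_e(K_n^d, r)=\binom{d+r}{d+1}$.
   Context: All graphs are finite, simple and undirected. Given graphs $G$ and $H$, the $H$-bootstrap percolation process on $G$ starts with a set $E_0\subseteq E(G)$ of initially activated edges, and for $i\geqslant1$, $E_i$ consists of $E_{i-1}$ together with all edges $e\in E(G)$ for which there is a subgraph $H_e$ of $G$ isomorphic to $H$ with $e\in E(H_e)$ and $E(H_e)\setminus\{e\}\subseteq E_{i-1}$. $E_0$ is a percolating set if $\bigcup_{i\geqslant0}E_i=E(G)$. The weak saturation number $\mathrm{wsat}(G,H)$ is the minimum size of a percolating set. Define $m_e(G,r)=\mathrm{wsat}(G,S_{r+1})$, where $S_{r+1}$ is the star graph on $r+2$ vertices (one center and $r+1$ leaves). $K_n$ is the complete graph with vertex set $\{0,\ldots,n-1\}$ and $K_n^d$ is the Cartesian product of $d$ copies of $K_n$: vertex set $\{0,\ldots,n-1\}^d$, two vertices adjacent iff they differ in exactly one coordinate. *)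

theory Defs
  imports Main
begin

text \<open>A finite simple graph is represented as a pair (V, E) of a vertex set and a set
of edges, each edge being a 2-element subset of V.\<close>

type_synonym 'a graph = "'a set \<times> 'a set set"

definition verts :: "'a graph \<Rightarrow> 'a set" where "verts G = fst G"
definition edges :: "'a graph \<Rightarrow> 'a set set" where "edges G = snd G"

definition copies :: "'a graph \<Rightarrow> 'b graph \<Rightarrow> 'a set set set" where
  "copies G H = {(\<lambda>e. f ` e) ` edges H | f. inj_on f (verts H) \<and> f ` verts H \<subseteq> verts G
                    \<and> (\<forall>e\<in>edges H. f ` e \<in> edges G)}"

definition boot_step :: "'a graph \<Rightarrow> 'b graph \<Rightarrow> 'a set set \<Rightarrow> 'a set set" where
  "boot_step G H F = F \<union> {e \<in> edges G. \<exists>C \<in> copies G H. e \<in> C \<and> C - {e} \<subseteq> F}"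

definition percolating :: "'a graph \<Rightarrow> 'b graph \<Rightarrow> 'a set set \<Rightarrow> bool" where
  "percolating G H E0 \<longleftrightarrow> E0 \<subseteq> edges G \<and> (\<Union>i. (boot_step G H ^^ i) E0) = edges G"

definition wsat :: "'a graph \<Rightarrow> 'b graph \<Rightarrow> nat" where
  "wsat G H = (LEAST k. \<exists>E0. percolating G H E0 \<and> card E0 = k)"

definition star :: "nat \<Rightarrow> nat graph" where
  "star r = ({0..r+1}, {{0, i} | i. 1 \<le> i \<and> i \<le> r + 1})"

definition m_e :: "'a graph \<Rightarrow> nat \<Rightarrow> nat" where
  "m_e G r = wsat G (star r)"

definition Kpow :: "nat \<Rightarrow> nat \<Rightarrow> nat list graph" where
  "Kpow n d = ({x. length x = d \<and> (\<forall>i<d. x ! i < n)},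
               {{x, y} | x y. length x = d \<and> (\<forall>i<d. x ! i < n) \<and>
                              length y = d \<and> (\<forall>i<d. y ! i < n) \<and>
                              card {i. i < d \<and> x ! i \<noteq> y ! i} = 1})"

end

theory Submission
  imports Defs "HOL-Library.Function_Algebras" "HOL-Library.Nat_Bijection"
    "HOL-Computational_Algebra.Polynomial"
begin

text \<open>
Write \<open>d = m + 1\<close>. The seed edges \<open>{a z, b z}\<close> with \<open>a < b\<close>, \<open>|z| = m\<close> and
\<open>b + \<Sum>z \<le> r\<close> are counted by \<open>(d + r) choose (d + 1)\<close>, and they percolate: by induction
on the coordinate sum of a vertex \<open>x = a z\<close>, all edges from \<open>x\<close> to its \<open>\<Sum>x\<close> lower
neighbours are already infected, and if \<open>\<Sum>x < r\<close> the seed edges towards \<open>b z\<close>,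
\<open>a < b \<le> r - \<Sum>z\<close>, make up the missing ones; \<open>r\<close> infected edges at \<open>x\<close> infect all others.

For the lower bound (the polynomial method), label every pair (coordinate \<open>j\<close>, value \<open>v\<close>)
by a distinct real number and map an edge \<open>e\<close> to the function
\<open>W e (c) = \<Prod> p\<^sub>c(t)\<close> of the coefficient vector \<open>c\<close> of a polynomial \<open>p\<^sub>c\<close> of degree
\<open>< r\<close>, the product running over the labels \<open>t\<close> of the coordinates of the two ends of \<open>e\<close>.
At a vertex \<open>x\<close> we get \<open>W {x, y} = W {x} \<cdot> p\<^sub>c(t\<^sub>y)\<close> with distinct new labels \<open>t\<^sub>y\<close>,
so by Lagrange interpolation any \<open>r + 1\<close> edges of a star are linearly dependent and every
infected edge has its witness in the span of the witnesses of the initial set. The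
witnesses of the seed edges are linearly independent: evaluated at the coefficients of
the polynomial vanishing on the labels "below" a seed edge, they form a triangular system.
\<close>

section \<open>Lagrange interpolation\<close>

definition lagrange_basis :: "'a::field set \<Rightarrow> 'a \<Rightarrow> 'a \<Rightarrow> 'a" where
  "lagrange_basis S s t = (\<Prod>s'\<in>S - {s}. (t - s') / (s - s'))"

lemma lagrange_interpolation:
  fixes p :: "'a::field poly"
  assumes "finite S" and "degree p < card S"
  shows "poly p t = (\<Sum>s\<in>S. lagrange_basis S s t * poly p s)"
proof -
  define L where "L s = (\<Prod>s'\<in>S - {s}. smult (1 / (s - s')) [:- s', 1:])" for s
  define q where "q = (\<Sum>s\<in>S. smult (poly p s) (L s))"
  have poly_L: "poly (L s) x = (\<Prod>s'\<in>S - {s}. (x - s') / (s - s'))" for s x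
    by (simp add: L_def poly_prod diff_divide_distrib)
  have poly_q: "poly q x = (\<Sum>s\<in>S. (\<Prod>s'\<in>S - {s}. (x - s') / (s - s')) * poly p s)" for x
    by (simp add: q_def poly_sum poly_L mult.commute)
  have "degree (L s) \<le> card S - 1" if "s \<in> S" for s
  proof -
    have "degree (L s) \<le> sum (degree \<circ> (\<lambda>s'. smult (1 / (s - s')) [:- s', 1:])) (S - {s})"
      unfolding L_def using assms(1) by (intro degree_prod_sum_le) simp
    also have "\<dots> \<le> card (S - {s})"
      using sum_mono[of "S - {s}" "degree \<circ> (\<lambda>s'. smult (1 / (s - s')) [:- s', 1:])" "\<lambda>_. 1"]
      by (simp add: order.trans[OF degree_smult_le])
    also have "\<dots> = card S - 1"
      using assms(1) that by simp
    finally show ?thesis .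
  qed
  then have degree_q: "degree q \<le> card S - 1"
    unfolding q_def using assms(1) by (intro degree_sum_le) (auto intro: order.trans[OF degree_smult_le])
  have poly_q_S: "poly q s = poly p s" if "s \<in> S" for s
  proof -
    have vanish: "(\<Prod>s'\<in>S - {s''}. (s - s') / (s'' - s')) = 0" if "s'' \<in> S - {s}" for s''
      using assms(1) \<open>s \<in> S\<close> that by (intro prod_zero) auto
    have "poly q s = (\<Prod>s'\<in>S - {s}. (s - s') / (s - s')) * poly p s
        + (\<Sum>s''\<in>S - {s}. (\<Prod>s'\<in>S - {s''}. (s - s') / (s'' - s')) * poly p s'')"
      using assms(1) that by (simp add: poly_q sum.remove)
    also have "(\<Prod>s'\<in>S - {s}. (s - s') / (s - s')) = 1"
      by (rule prod.neutral) auto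
    finally show ?thesis
      using vanish by simp
  qed
  have "q = p"
  proof (rule poly_eqI_degree[of S])
    show "poly q x = poly p x" if "x \<in> S" for x
      using that by (rule poly_q_S)
    show "degree q < card S"
      using degree_q assms(2) by linarith
  qed (rule assms(2))
  with poly_q[of t] show ?thesis by (simp add: lagrange_basis_def)
qed

definition poly_of_coeffs :: "nat \<Rightarrow> (nat \<Rightarrow> 'a::comm_ring_1) \<Rightarrow> 'a poly" where
  "poly_of_coeffs r c = (\<Sum>k<r. monom (c k) k)"

lemma degree_poly_of_coeffs:
  assumes "0 < r"
  shows "degree (poly_of_coeffs r c) < r"
proof -
  have "degree (poly_of_coeffs r c) \<le> r - 1"
    unfolding poly_of_coeffs_def by (intro degree_sum_le) (auto intro: order.trans[OF degree_monom_le])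
  then show ?thesis using assms by linarith
qed

lemma poly_of_coeffs_coeff:
  assumes "degree p < r"
  shows "poly_of_coeffs r (coeff p) = p"
proof -
  have "{..<r} = {..r - 1}" using assms by auto
  then show ?thesis
    unfolding poly_of_coeffs_def using assms by (simp add: poly_as_sum_of_monoms')
qed

section \<open>Triangular families of real functions\<close>

interpretation fun_vs: vector_space "\<lambda>(a::real) (f :: 'a \<Rightarrow> real) x. a * f x"
  by unfold_locales (auto simp: fun_eq_iff algebra_simps)

lemma sum_apply: "sum f A x = (\<Sum>a\<in>A. f a x)"
  by (induction A rule: infinite_finite_induct) auto

lemma triangular_independent:
  fixes f :: "'i \<Rightarrow> 'a \<Rightarrow> real" and c :: "'i \<Rightarrow> 'a" and w :: "'i \<Rightarrow> 'w::linorder"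
  assumes fin: "finite I"
    and diag: "\<And>i. i \<in> I \<Longrightarrow> f i (c i) \<noteq> 0"
    and tri: "\<And>i j. i \<in> I \<Longrightarrow> j \<in> I \<Longrightarrow> f j (c i) \<noteq> 0 \<Longrightarrow> j = i \<or> w i < w j"
  shows "inj_on f I" and "fun_vs.independent (f ` I)"
proof -
  show inj: "inj_on f I"
  proof (rule inj_onI)
    fix i j assume ij: "i \<in> I" "j \<in> I" "f i = f j"
    show "i = j" using tri[OF ij(1,2)] tri[OF ij(2,1)] diag[OF ij(1)] diag[OF ij(2)] ij(3) by auto
  qed
  show "fun_vs.independent (f ` I)"
  proof (rule fun_vs.independent_if_scalars_zero)
    show "finite (f ` I)" using fin by simp
  next
    fix g v assume sum0: "(\<Sum>u\<in>f ` I. (\<lambda>x. g u * u x)) = 0" and v: "v \<in> f ` I"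
    define Z where "Z = {i \<in> I. g (f i) \<noteq> 0}"
    show "g v = 0"
    proof (rule ccontr)
      assume "g v \<noteq> 0"
      then have "Z \<noteq> {}" using v by (auto simp: Z_def)
      moreover have "finite Z" using fin by (simp add: Z_def)
      \<comment> \<open>a nonzero coefficient of maximal weight is isolated by evaluation at its point\<close>
      ultimately obtain i where i: "i \<in> Z" "w i = Max (w ` Z)"
        by (metis (mono_tags, lifting) Max_in finite_imageI image_iff image_is_empty)
      have "j = i" if "j \<in> I" "g (f j) * f j (c i) \<noteq> 0" for j
      proof -
        have "w j \<le> w i" using that \<open>finite Z\<close> i(2) by (auto simp: Z_def)
        then show ?thesis using tri[of i j] i(1) that by (auto simp: Z_def)
      qed
      then have "(\<Sum>j\<in>I. g (f j) * f j (c i)) = g (f i) * f i (c i)"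
        using i(1) fin by (subst sum.mono_neutral_right[of I "{i}"]) (auto simp: Z_def)
      moreover have "(\<Sum>j\<in>I. g (f j) * f j (c i)) = 0"
        using arg_cong[OF sum0, of "\<lambda>h. h (c i)"] sum.reindex[OF inj, of "\<lambda>u. g u * u (c i)"]
        by (simp add: sum_apply)
      ultimately show False using i(1) diag by (auto simp: Z_def)
    qed
  qed
qed

definition boot_closure :: "'a graph \<Rightarrow> 'b graph \<Rightarrow> 'a set set \<Rightarrow> 'a set set" where
  "boot_closure G H E0 = (\<Union>i. (boot_step G H ^^ i) E0)"

lemma percolating_iff_boot_closure:
  "percolating G H E0 \<longleftrightarrow> E0 \<subseteq> edges G \<and> boot_closure G H E0 = edges G"
  by (simp add: percolating_def boot_closure_def)

lemma mono_funpow_boot_step: "mono (\<lambda>i. (boot_step G H ^^ i) E0)"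
  unfolding mono_iff_le_Suc by (auto simp: boot_step_def)

lemma funpow_boot_step_subset_edges:
  "E0 \<subseteq> edges G \<Longrightarrow> (boot_step G H ^^ i) E0 \<subseteq> edges G"
  by (induction i) (auto simp: boot_step_def)

lemma boot_closure_subset_edges: "E0 \<subseteq> edges G \<Longrightarrow> boot_closure G H E0 \<subseteq> edges G"
  unfolding boot_closure_def using funpow_boot_step_subset_edges by blast

lemma subset_boot_closure: "E0 \<subseteq> boot_closure G H E0"
  unfolding boot_closure_def by (metis UN_upper UNIV_I funpow_0)

lemma finite_subset_UN_mono:
  fixes A :: "nat \<Rightarrow> 'a set"
  assumes "mono A" and "finite F" and "F \<subseteq> (\<Union>i. A i)"
  shows "\<exists>i. F \<subseteq> A i"
  using assms(2,3)
proof (induction F rule: finite_induct)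
  case (insert x F)
  then obtain i j where "F \<subseteq> A i" "x \<in> A j" by blast
  then have "insert x F \<subseteq> A (max i j)"
    using monoD[OF assms(1), of i "max i j"] monoD[OF assms(1), of j "max i j"] by auto
  then show ?case ..
qed simp

lemma boot_closure_step:
  assumes "C \<in> copies G H" and "finite C" and "e \<in> C" and "C - {e} \<subseteq> boot_closure G H E0"
  shows "e \<in> boot_closure G H E0"
proof -
  obtain i where i: "C - {e} \<subseteq> (boot_step G H ^^ i) E0"
    using finite_subset_UN_mono[OF mono_funpow_boot_step, of "C - {e}"] assms(2,4)
    unfolding boot_closure_def by blast
  have "e \<in> edges G" using assms(1,3) by (auto simp: copies_def)
  then have "e \<in> (boot_step G H ^^ Suc i) E0"
    using assms(1,3) i by (auto simp: boot_step_def)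
  then show ?thesis unfolding boot_closure_def by blast
qed

context vector_space
begin

lemma boot_closure_subset_span:
  assumes dep: "\<And>C e. C \<in> copies G H \<Longrightarrow> e \<in> C \<Longrightarrow> W e \<in> span (W ` (C - {e}))"
  shows "W ` boot_closure G H E0 \<subseteq> span (W ` E0)"
proof -
  have "W ` (boot_step G H ^^ i) E0 \<subseteq> span (W ` E0)" for i
  proof (induction i)
    case 0
    then show ?case by (simp add: span_superset)
  next
    case (Suc i)
    define F where "F = (boot_step G H ^^ i) E0"
    have "W e \<in> span (W ` E0)" if e: "e \<in> boot_step G H F" for e
    proof (cases "e \<in> F")
      case True
      then show ?thesis using Suc.IH by (auto simp: F_def)
    next
      case False
      then obtain C where "C \<in> copies G H" "e \<in> C" "C - {e} \<subseteq> F"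
        using e False unfolding boot_step_def by blast
      then have "W e \<in> span (W ` (C - {e}))" and "W ` (C - {e}) \<subseteq> span (W ` E0)"
        using dep Suc.IH unfolding F_def by blast+
      then show ?thesis using span_minimal[OF _ subspace_span] by blast
    qed
    then show ?case by (auto simp: F_def)
  qed
  then show ?thesis unfolding boot_closure_def by blast
qed

lemma card_le_percolating_set:
  assumes perc: "percolating G H E0" and fin: "finite (edges G)"
    and dep: "\<And>C e. C \<in> copies G H \<Longrightarrow> e \<in> C \<Longrightarrow> W e \<in> span (W ` (C - {e}))"
    and A: "A \<subseteq> edges G" "inj_on W A" "independent (W ` A)"
  shows "card A \<le> card E0"
proof -
  have E0: "E0 \<subseteq> edges G" "boot_closure G H E0 = edges G"
    using perc by (auto simp: percolating_iff_boot_closure)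
  have "finite E0" using E0(1) fin by (rule finite_subset)
  have "W ` A \<subseteq> span (W ` E0)"
    using boot_closure_subset_span[OF dep] A(1) E0(2) by blast
  then have "card (W ` A) \<le> card (W ` E0)"
    using independent_span_bound[OF _ A(3)] \<open>finite E0\<close> by blast
  also have "\<dots> \<le> card E0"
    using \<open>finite E0\<close> by (rule card_image_le)
  finally show ?thesis using A(2) by (simp add: card_image)
qed

end

lemma wsat_eqI:
  assumes "percolating G H E0" and "\<And>E. percolating G H E \<Longrightarrow> card E0 \<le> card E"
  shows "wsat G H = card E0"
  unfolding wsat_def using assms by (intro Least_equality) auto

definition simple_graph :: "'a graph \<Rightarrow> bool" where
  "simple_graph G \<longleftrightarrow> (\<forall>e\<in>edges G. e \<subseteq> verts G \<and> card e = 2)"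

lemma verts_star: "verts (star r) = {0..Suc r}"
  by (simp add: star_def verts_def)

lemma edges_star: "edges (star r) = (\<lambda>i. {0, i}) ` {1..Suc r}"
  by (auto simp: star_def edges_def)

lemma copies_star_iff:
  assumes "simple_graph G"
  shows "C \<in> copies G (star r) \<longleftrightarrow>
    (\<exists>x Y. card Y = Suc r \<and> (\<forall>y\<in>Y. {x, y} \<in> edges G) \<and> C = (\<lambda>y. {x, y}) ` Y)"
proof
  assume "C \<in> copies G (star r)"
  then obtain f where f: "C = (\<lambda>e. f ` e) ` edges (star r)" "inj_on f {0..Suc r}"
      "\<forall>e\<in>edges (star r). f ` e \<in> edges G"
    unfolding copies_def verts_star by blast
  have "card (f ` {1..Suc r}) = Suc r"
    using inj_on_subset[OF f(2)] by (subst card_image) auto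
  moreover have "\<forall>y\<in>f ` {1..Suc r}. {f 0, y} \<in> edges G"
    using f(3) by (simp add: edges_star)
  moreover have "C = (\<lambda>y. {f 0, y}) ` f ` {1..Suc r}"
    unfolding f(1) edges_star image_image by simp
  ultimately show "\<exists>x Y. card Y = Suc r \<and> (\<forall>y\<in>Y. {x, y} \<in> edges G) \<and> C = (\<lambda>y. {x, y}) ` Y"
    by blast
next
  assume "\<exists>x Y. card Y = Suc r \<and> (\<forall>y\<in>Y. {x, y} \<in> edges G) \<and> C = (\<lambda>y. {x, y}) ` Y"
  then obtain x Y where Y: "card Y = Suc r" "\<forall>y\<in>Y. {x, y} \<in> edges G" "C = (\<lambda>y. {x, y}) ` Y"
    by blast
  have edge_Y: "{x, y} \<subseteq> verts G \<and> card {x, y} = 2" if "y \<in> Y" for y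
    using Y(2) that assms unfolding simple_graph_def by blast
  then have "x \<notin> Y" by fastforce
  have "Y \<noteq> {}" using Y(1) by auto
  then have "insert x Y \<subseteq> verts G" using edge_Y by blast
  have "finite Y" using Y(1) by (simp add: card_ge_0_finite)
  then obtain h where h: "bij_betw h {1..Suc r} Y"
    using ex_bij_betw_nat_finite_1[of Y] Y(1) by auto
  define f where "f = h(0 := x)"
  have "f ` {1..Suc r} = h ` {1..Suc r}" and "inj_on f {1..Suc r} \<longleftrightarrow> inj_on h {1..Suc r}"
    by (auto simp: f_def intro!: image_cong inj_on_cong)
  then have f_on: "f ` {1..Suc r} = Y" "inj_on f {1..Suc r}"
    using h by (auto simp: bij_betw_def)
  have range: "{0..Suc r} = insert 0 {1..Suc r}" by auto
  have "inj_on f {0..Suc r}"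
    unfolding range using f_on \<open>x \<notin> Y\<close> by (simp add: f_def)
  moreover have "f ` {0..Suc r} \<subseteq> verts G"
    using \<open>insert x Y \<subseteq> verts G\<close> unfolding range image_insert f_on(1) by (simp add: f_def)
  moreover have "C = (\<lambda>e. f ` e) ` edges (star r)"
    unfolding Y(3) edges_star image_image f_on(1)[symmetric] by (simp add: f_def insert_commute)
  moreover have "\<forall>e\<in>edges (star r). f ` e \<in> edges G"
    using Y(2) f_on(1) unfolding edges_star by (auto simp: f_def insert_commute)
  ultimately show "C \<in> copies G (star r)"
    unfolding copies_def verts_star by blast
qed

lemma boot_closure_star_step:
  assumes G: "simple_graph G" and E0: "E0 \<subseteq> edges G" and e: "{x, y} \<in> edges G"
    and N: "finite N" "r \<le> card N" "\<forall>w\<in>N. {x, w} \<in> boot_closure G (star r) E0"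
  shows "{x, y} \<in> boot_closure G (star r) E0"
proof (cases "y \<in> N")
  case True
  then show ?thesis using N(3) by blast
next
  case False
  obtain N' where N': "N' \<subseteq> N" "card N' = r"
    using obtain_subset_with_card_n[OF N(2)] by blast
  have "finite N'" using N'(1) N(1) by (rule finite_subset)
  have closed: "(\<lambda>w. {x, w}) ` N' \<subseteq> boot_closure G (star r) E0"
    using N'(1) N(3) by blast
  then have "\<forall>w\<in>insert y N'. {x, w} \<in> edges G"
    using e boot_closure_subset_edges[OF E0] by blast
  moreover have "card (insert y N') = Suc r"
    using False N' \<open>finite N'\<close> by (subst card_insert_disjoint) auto
  ultimately have C: "(\<lambda>w. {x, w}) ` insert y N' \<in> copies G (star r)"
    using copies_star_iff[OF G] by blast
  have "(\<lambda>w. {x, w}) ` insert y N' - {{x, y}} \<subseteq> boot_closure G (star r) E0"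
    using closed by blast
  then show ?thesis
    using boot_closure_step[OF C] \<open>finite N'\<close> by blast
qed

lemma mem_verts_Kpow: "x \<in> verts (Kpow n d) \<longleftrightarrow> length x = d \<and> (\<forall>i<d. x ! i < n)"
  by (simp add: verts_def Kpow_def)

lemma card_differ_eq_1_iff:
  "card {i. i < d \<and> x ! i \<noteq> y ! i} = 1 \<longleftrightarrow>
    (\<exists>j<d. x ! j \<noteq> y ! j \<and> (\<forall>i<d. i \<noteq> j \<longrightarrow> x ! i = y ! i))"
  by (auto simp: card_1_singleton_iff set_eq_iff)

lemma Kpow_edge_iff:
  "{x, y} \<in> edges (Kpow n d) \<longleftrightarrow> x \<in> verts (Kpow n d) \<and> y \<in> verts (Kpow n d) \<and>
    (\<exists>j<d. x ! j \<noteq> y ! j \<and> (\<forall>i<d. i \<noteq> j \<longrightarrow> x ! i = y ! i))"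
  unfolding edges_def Kpow_def verts_def card_differ_eq_1_iff
  by (auto simp: doubleton_eq_iff)

lemma Kpow_adjE:
  assumes "{x, y} \<in> edges (Kpow n d)"
  obtains j where "x \<in> verts (Kpow n d)" "y \<in> verts (Kpow n d)" "j < d" "x ! j \<noteq> y ! j"
    "\<forall>i<d. i \<noteq> j \<longrightarrow> x ! i = y ! i"
  using assms unfolding Kpow_edge_iff by blast

lemma Kpow_edgeE:
  assumes "e \<in> edges (Kpow n d)"
  obtains x y where "e = {x, y}" "{x, y} \<in> edges (Kpow n d)"
  using assms by (auto simp: edges_def Kpow_def)

lemma simple_graph_Kpow: "simple_graph (Kpow n d)"
  unfolding simple_graph_def
proof
  fix e assume "e \<in> edges (Kpow n d)"
  then obtain x y j where "e = {x, y}" "x \<in> verts (Kpow n d)" "y \<in> verts (Kpow n d)" "x ! j \<noteq> y ! j"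
    by (metis Kpow_edgeE Kpow_adjE)
  then show "e \<subseteq> verts (Kpow n d) \<and> card e = 2" by (cases "x = y") auto
qed

lemma finite_edges_Kpow: "finite (edges (Kpow n d))"
proof -
  have "verts (Kpow n d) \<subseteq> {x. set x \<subseteq> {..<n} \<and> length x = d}"
    by (auto simp: mem_verts_Kpow in_set_conv_nth)
  then have "finite (verts (Kpow n d))"
    using finite_lists_length_eq[of "{..<n}" d] finite_subset by blast
  moreover have "edges (Kpow n d) \<subseteq> Pow (verts (Kpow n d))"
    using simple_graph_Kpow by (auto simp: simple_graph_def)
  ultimately show ?thesis by (meson finite_Pow_iff finite_subset)
qed

section \<open>Polynomial witnesses\<close>

definition label :: "nat \<Rightarrow> nat \<Rightarrow> real" where
  "label j v = real (prod_encode (j, v))"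

lemma label_eq_iff [simp]: "label j v = label j' v' \<longleftrightarrow> j = j' \<and> v = v'"
  by (auto simp: label_def prod_encode_eq)

definition labels :: "nat \<Rightarrow> nat list set \<Rightarrow> real set" where
  "labels d e = {label j (v ! j) | v j. v \<in> e \<and> j < d}"

lemma labels_insert: "labels d (insert v e) = (\<lambda>j. label j (v ! j)) ` {..<d} \<union> labels d e"
  by (auto simp: labels_def)

lemma finite_labels: "finite e \<Longrightarrow> finite (labels d e)"
  by (induction e rule: finite_induct) (auto simp: labels_insert, simp add: labels_def)

definition witness :: "nat \<Rightarrow> nat \<Rightarrow> nat list set \<Rightarrow> (nat \<Rightarrow> real) \<Rightarrow> real" where
  "witness d r e c = (\<Prod>t\<in>labels d e. poly (poly_of_coeffs r c) t)"

definition new_label :: "nat \<Rightarrow> nat list \<Rightarrow> nat list \<Rightarrow> real" where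
  "new_label d x y = (let j = SOME j. j < d \<and> x ! j \<noteq> y ! j in label j (y ! j))"

lemma new_label_eq:
  assumes "j < d" "x ! j \<noteq> y ! j" "\<forall>i<d. i \<noteq> j \<longrightarrow> x ! i = y ! i"
  shows "new_label d x y = label j (y ! j)"
proof -
  have "(SOME j. j < d \<and> x ! j \<noteq> y ! j) = j"
    using assms by (intro some_equality) auto
  then show ?thesis by (simp add: new_label_def)
qed

lemma labels_Kpow_edge:
  assumes "{x, y} \<in> edges (Kpow n d)"
  shows "labels d {x, y} = insert (new_label d x y) (labels d {x})"
    and "new_label d x y \<notin> labels d {x}"
proof -
  obtain j where j: "j < d" "x ! j \<noteq> y ! j" "\<forall>i<d. i \<noteq> j \<longrightarrow> x ! i = y ! i"
    using assms by (rule Kpow_adjE)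
  have "label i (y ! i) \<in> insert (label j (y ! j)) (labels d {x})" if "i < d" for i
    using that j(3) by (cases "i = j") (auto simp: labels_def)
  then show "labels d {x, y} = insert (new_label d x y) (labels d {x})"
    using j by (auto simp: new_label_eq labels_def)
  show "new_label d x y \<notin> labels d {x}"
    using j by (auto simp: new_label_eq labels_def)
qed

lemma witness_Kpow_edge:
  assumes "{x, y} \<in> edges (Kpow n d)"
  shows "witness d r {x, y} c = witness d r {x} c * poly (poly_of_coeffs r c) (new_label d x y)"
  using labels_Kpow_edge[OF assms] finite_labels[of "{x}" d] by (simp add: witness_def mult.commute)

lemma new_label_inj:
  assumes "{x, y} \<in> edges (Kpow n d)" "{x, y'} \<in> edges (Kpow n d)"
    and "new_label d x y = new_label d x y'"
  shows "y = y'"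
proof -
  obtain j where j: "y \<in> verts (Kpow n d)" "j < d" "x ! j \<noteq> y ! j" "\<forall>i<d. i \<noteq> j \<longrightarrow> x ! i = y ! i"
    using assms(1) by (rule Kpow_adjE)
  obtain j' where j': "y' \<in> verts (Kpow n d)" "j' < d" "x ! j' \<noteq> y' ! j'"
      "\<forall>i<d. i \<noteq> j' \<longrightarrow> x ! i = y' ! i"
    using assms(2) by (rule Kpow_adjE)
  have "j = j'" "y ! j = y' ! j"
    using assms(3) new_label_eq[OF j(2-4)] new_label_eq[OF j'(2-4)] by auto
  then have "y ! i = y' ! i" if "i < d" for i
    using that j j' by (cases "i = j") auto
  then show ?thesis
    using j(1) j'(1) by (intro nth_equalityI) (auto simp: mem_verts_Kpow)
qed

lemma witness_Kpow_star_dependence: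
  assumes "0 < r" and "finite Y" and "card Y = r"
    and "{x, y0} \<in> edges (Kpow n d)" and "\<forall>y\<in>Y. {x, y} \<in> edges (Kpow n d)"
  shows "witness d r {x, y0} = (\<Sum>y\<in>Y. (\<lambda>c.
    lagrange_basis (new_label d x ` Y) (new_label d x y) (new_label d x y0) * witness d r {x, y} c))"
    (is "_ = (\<Sum>y\<in>Y. (\<lambda>c. ?L y * _))")
proof
  fix c :: "nat \<Rightarrow> real"
  let ?p = "poly_of_coeffs r c" and ?S = "new_label d x ` Y"
  have inj: "inj_on (new_label d x) Y"
    using assms(5) new_label_inj by (blast intro: inj_onI)
  then have "card ?S = r" using assms(3) by (simp add: card_image)
  then have "poly ?p (new_label d x y0) = (\<Sum>s\<in>?S. lagrange_basis ?S s (new_label d x y0) * poly ?p s)"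
    using assms(2) by (intro lagrange_interpolation) (simp_all add: degree_poly_of_coeffs[OF assms(1)])
  also have "\<dots> = (\<Sum>y\<in>Y. ?L y * poly ?p (new_label d x y))"
    using inj by (rule sum.reindex[unfolded comp_def])
  finally have "witness d r {x, y0} c = witness d r {x} c * (\<Sum>y\<in>Y. ?L y * poly ?p (new_label d x y))"
    using witness_Kpow_edge[OF assms(4)] by simp
  also have "\<dots> = (\<Sum>y\<in>Y. ?L y * (witness d r {x} c * poly ?p (new_label d x y)))"
    by (simp add: sum_distrib_left mult.left_commute)
  also have "\<dots> = (\<Sum>y\<in>Y. ?L y * witness d r {x, y} c)"
    using assms(5) witness_Kpow_edge by (intro sum.cong refl) auto
  finally show "witness d r {x, y0} c = (\<Sum>y\<in>Y. (\<lambda>c. ?L y * witness d r {x, y} c)) c"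
    by (simp add: sum_apply)
qed

lemma witness_in_span_star:
  assumes "0 < r" and "C \<in> copies (Kpow n d) (star r)" and "e \<in> C"
  shows "witness d r e \<in> fun_vs.span (witness d r ` (C - {e}))"
proof -
  obtain x Y where Y: "card Y = Suc r" "\<forall>y\<in>Y. {x, y} \<in> edges (Kpow n d)" "C = (\<lambda>y. {x, y}) ` Y"
    using assms(2) unfolding copies_star_iff[OF simple_graph_Kpow] by blast
  then obtain y0 where y0: "y0 \<in> Y" "e = {x, y0}"
    using assms(3) by blast
  have C_minus: "C - {e} = (\<lambda>y. {x, y}) ` (Y - {y0})"
    using Y(3) y0 by (auto simp: doubleton_eq_iff)
  have "finite (Y - {y0})" and "card (Y - {y0}) = r"
    using Y(1) y0(1) by (simp_all add: card_ge_0_finite)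
  then have "witness d r e = (\<Sum>y\<in>Y - {y0}. (\<lambda>c. lagrange_basis (new_label d x ` (Y - {y0}))
      (new_label d x y) (new_label d x y0) * witness d r {x, y} c))"
    unfolding y0(2) by (rule witness_Kpow_star_dependence[OF assms(1)]) (use Y(2) y0(1) in auto)
  also have "\<dots> \<in> fun_vs.span (witness d r ` (C - {e}))"
    unfolding C_minus by (intro fun_vs.span_sum fun_vs.span_scale fun_vs.span_base) auto
  finally show ?thesis .
qed

definition seed_triples :: "nat \<Rightarrow> nat \<Rightarrow> (nat \<times> nat \<times> nat list) set" where
  "seed_triples r m = {(a, b, z). a < b \<and> length z = m \<and> b + sum_list z \<le> r}"

definition seed_edge :: "nat \<times> nat \<times> nat list \<Rightarrow> nat list set" where
  "seed_edge = (\<lambda>(a, b, z). {a # z, b # z})"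

lemma finite_seed_triples: "finite (seed_triples r m)"
proof -
  have "seed_triples r m \<subseteq> {..r} \<times> {..r} \<times> {z. set z \<subseteq> {..r} \<and> length z = m}"
    using member_le_sum_list by (fastforce simp: seed_triples_def)
  moreover have "finite ({..r} \<times> {..r} \<times> {z. set z \<subseteq> {..r} \<and> length z = m})"
    by (intro finite_cartesian_product finite_lists_length_eq) auto
  ultimately show ?thesis by (rule finite_subset)
qed

lemma inj_on_seed_edge: "inj_on seed_edge (seed_triples r m)"
proof (rule inj_onI)
  fix \<tau> \<tau>'
  assume \<tau>: "\<tau> \<in> seed_triples r m" "\<tau>' \<in> seed_triples r m" and eq: "seed_edge \<tau> = seed_edge \<tau>'"
  obtain a b z a' b' z' where abz: "\<tau> = (a, b, z)" "\<tau>' = (a', b', z')"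
    by (cases \<tau>, cases \<tau>')
  then have "a < b" "a' < b'" using \<tau> by (auto simp: seed_triples_def)
  moreover have "(a # z = a' # z' \<and> b # z = b' # z') \<or> (a # z = b' # z' \<and> b # z = a' # z')"
    using eq by (simp add: abz seed_edge_def doubleton_eq_iff)
  ultimately show "\<tau> = \<tau>'" using abz by auto
qed

lemma seed_edges_subset_edges:
  assumes "r < n"
  shows "seed_edge ` seed_triples r m \<subseteq> edges (Kpow n (Suc m))"
proof clarify
  fix a b z assume "(a, b, z) \<in> seed_triples r m"
  then have abz: "a < b" "length z = m" "b + sum_list z \<le> r"
    by (auto simp: seed_triples_def)
  have "z ! k < n" if "k < m" for k
    using elem_le_sum_list[of k z] abz that assms by simp
  then have "a # z \<in> verts (Kpow n (Suc m))" "b # z \<in> verts (Kpow n (Suc m))"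
    using abz assms by (auto simp: mem_verts_Kpow nth_Cons split: nat.splits)
  moreover have "\<exists>j<Suc m. (a # z) ! j \<noteq> (b # z) ! j \<and> (\<forall>i<Suc m. i \<noteq> j \<longrightarrow> (a # z) ! i = (b # z) ! i)"
    using abz(1) by (intro exI[of _ 0]) (auto simp: nth_Cons split: nat.splits)
  ultimately show "seed_edge (a, b, z) \<in> edges (Kpow n (Suc m))"
    by (simp add: seed_edge_def Kpow_edge_iff)
qed

section \<open>Independence of the seed witnesses\<close>

definition test_roots :: "nat \<times> nat \<times> nat list \<Rightarrow> real set" where
  "test_roots = (\<lambda>(a, b, z). label 0 ` ({..<b} - {a}) \<union> (\<Union>j<length z. label (Suc j) ` {..<z ! j}))"

definition test_poly :: "nat \<times> nat \<times> nat list \<Rightarrow> real poly" where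
  "test_poly \<tau> = (\<Prod>\<rho>\<in>test_roots \<tau>. [:- \<rho>, 1:])"

definition seed_weight :: "nat \<times> nat \<times> nat list \<Rightarrow> nat" where
  "seed_weight = (\<lambda>(a, b, z). a + b + sum_list z)"

lemma finite_test_roots: "finite (test_roots \<tau>)"
  by (auto simp: test_roots_def split: prod.splits)

lemma card_test_roots_less:
  assumes "\<tau> \<in> seed_triples r m"
  shows "card (test_roots \<tau>) < r"
proof -
  obtain a b z where \<tau>: "\<tau> = (a, b, z)" "a < b" "b + sum_list z \<le> r"
    using assms by (auto simp: seed_triples_def)
  have "card (label 0 ` ({..<b} - {a})) \<le> b - 1"
    using card_image_le[of "{..<b} - {a}" "label 0"] \<tau>(2) by simp
  moreover have "card (\<Union>j<length z. label (Suc j) ` {..<z ! j}) \<le> (\<Sum>j<length z. z ! j)"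
    by (rule order.trans[OF card_UN_le sum_mono]) (auto intro: order.trans[OF card_image_le])
  moreover have "(\<Sum>j<length z. z ! j) = sum_list z"
    by (simp add: sum_list_sum_nth atLeast0LessThan)
  ultimately show ?thesis
    using card_Un_le[of "label 0 ` ({..<b} - {a})" "\<Union>j<length z. label (Suc j) ` {..<z ! j}"] \<tau>
    by (simp add: test_roots_def)
qed

lemma degree_test_poly_less:
  assumes "\<tau> \<in> seed_triples r m"
  shows "degree (test_poly \<tau>) < r"
proof -
  have "degree (test_poly \<tau>) \<le> card (test_roots \<tau>)"
    unfolding test_poly_def
    using degree_prod_sum_le[OF finite_test_roots, of "\<lambda>\<rho>. [:- \<rho>, 1:]" \<tau>] by (simp add: o_def)
  then show ?thesis using card_test_roots_less[OF assms] by linarith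
qed

lemma witness_test_poly_eq_0_iff:
  assumes "\<tau> \<in> seed_triples r m" and "finite e"
  shows "witness d r e (coeff (test_poly \<tau>)) = 0 \<longleftrightarrow> labels d e \<inter> test_roots \<tau> \<noteq> {}"
proof -
  have "poly_of_coeffs r (coeff (test_poly \<tau>)) = test_poly \<tau>"
    using degree_test_poly_less[OF assms(1)] by (rule poly_of_coeffs_coeff)
  moreover have "poly (test_poly \<tau>) t = 0 \<longleftrightarrow> t \<in> test_roots \<tau>" for t
    by (simp add: test_poly_def poly_prod finite_test_roots)
  ultimately show ?thesis
    using finite_labels[OF assms(2)] by (auto simp: witness_def)
qed

lemma labels_seed_edge:
  "labels (Suc m) (seed_edge (a, b, z)) = {label 0 a, label 0 b} \<union> (\<lambda>j. label (Suc j) (z ! j)) ` {..<m}"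
proof -
  have "(\<lambda>j. label j ((c # z) ! j)) ` {..<Suc m} = insert (label 0 c) ((\<lambda>j. label (Suc j) (z ! j)) ` {..<m})"
    for c
    by (simp add: lessThan_Suc_eq_insert_0 image_image)
  moreover have "labels d {} = {}" for d
    by (simp add: labels_def)
  ultimately show ?thesis
    by (auto simp: seed_edge_def labels_insert)
qed

lemma labels_seed_edge_disjoint_test_roots:
  assumes "(a, b, z) \<in> seed_triples r m"
  shows "labels (Suc m) (seed_edge (a, b, z)) \<inter> test_roots (a, b, z) = {}"
  using assms by (auto simp: labels_seed_edge test_roots_def seed_triples_def)

lemma sum_list_le_pointwise_eq:
  fixes z z' :: "nat list"
  assumes "length z = length z'" and "\<forall>j<length z. z ! j \<le> z' ! j"
  shows "sum_list z \<le> sum_list z'" and "sum_list z = sum_list z' \<Longrightarrow> z = z'"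
proof -
  have "sum_list z \<le> sum_list z' \<and> (sum_list z = sum_list z' \<longrightarrow> z = z')"
    using assms
  proof (induction z z' rule: list_induct2)
    case (Cons x xs y ys)
    have "x \<le> y"
      using Cons.prems[rule_format, of 0] by simp
    moreover have "\<forall>j<length xs. xs ! j \<le> ys ! j"
      using Cons.prems by (auto dest: spec[of _ "Suc _"])
    ultimately show ?case
      using Cons.IH by auto
  qed simp
  then show "sum_list z \<le> sum_list z'" and "sum_list z = sum_list z' \<Longrightarrow> z = z'" by auto
qed

lemma seed_triangular:
  assumes "(a, b, z) \<in> seed_triples r m" and "(a', b', z') \<in> seed_triples r m"
    and "labels (Suc m) (seed_edge (a', b', z')) \<inter> test_roots (a, b, z) = {}"
  shows "(a', b', z') = (a, b, z) \<or> seed_weight (a, b, z) < seed_weight (a', b', z')"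
proof -
  have abz: "a < b" "length z = m" "a' < b'" "length z' = m"
    using assms(1,2) by (auto simp: seed_triples_def)
  have "z ! j \<le> z' ! j" if "j < length z" for j
  proof (rule ccontr)
    assume "\<not> z ! j \<le> z' ! j"
    then have "label (Suc j) (z' ! j) \<in> label (Suc j) ` {..<z ! j}"
      by simp
    then have "label (Suc j) (z' ! j) \<in> test_roots (a, b, z)"
      unfolding test_roots_def using that by blast
    moreover have "label (Suc j) (z' ! j) \<in> labels (Suc m) (seed_edge (a', b', z'))"
      using that abz by (auto simp: labels_seed_edge)
    ultimately show False using assms(3) by blast
  qed
  then have z: "sum_list z \<le> sum_list z'" "sum_list z = sum_list z' \<Longrightarrow> z = z'"
    using sum_list_le_pointwise_eq[of z z'] abz by auto
  have "label 0 a' \<notin> test_roots (a, b, z)" "label 0 b' \<notin> test_roots (a, b, z)"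
    using assms(3) by (auto simp: labels_seed_edge)
  then have "\<not> (a' < b \<and> a' \<noteq> a)" and "\<not> (b' < b \<and> b' \<noteq> a)"
    by (auto simp: test_roots_def)
  then show ?thesis
    using z abz by (cases "a' = a") (auto simp: seed_weight_def)
qed

lemma seed_witnesses_independent:
  "inj_on (witness (Suc m) r \<circ> seed_edge) (seed_triples r m)"
  "fun_vs.independent ((witness (Suc m) r \<circ> seed_edge) ` seed_triples r m)"
proof -
  have finite_seed_edge: "finite (seed_edge \<tau>)" for \<tau>
    by (auto simp: seed_edge_def split: prod.splits)
  have diag: "(witness (Suc m) r \<circ> seed_edge) \<tau> (coeff (test_poly \<tau>)) \<noteq> 0"
    if "\<tau> \<in> seed_triples r m" for \<tau>
    using that labels_seed_edge_disjoint_test_roots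
    by (cases \<tau>) (simp add: witness_test_poly_eq_0_iff finite_seed_edge)
  have tri: "\<tau>' = \<tau> \<or> seed_weight \<tau> < seed_weight \<tau>'"
    if "\<tau> \<in> seed_triples r m" "\<tau>' \<in> seed_triples r m"
      "(witness (Suc m) r \<circ> seed_edge) \<tau>' (coeff (test_poly \<tau>)) \<noteq> 0" for \<tau> \<tau>'
    using that seed_triangular
    by (cases \<tau>, cases \<tau>') (simp add: witness_test_poly_eq_0_iff finite_seed_edge)
  show "inj_on (witness (Suc m) r \<circ> seed_edge) (seed_triples r m)"
    "fun_vs.independent ((witness (Suc m) r \<circ> seed_edge) ` seed_triples r m)"
    using triangular_independent[where I = "seed_triples r m" and f = "witness (Suc m) r \<circ> seed_edge"
        and c = "\<lambda>\<tau>. coeff (test_poly \<tau>)" and w = seed_weight, OF finite_seed_triples diag tri] by blast+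
qed

lemma card_seed_triples_le_percolating:
  assumes "0 < r" and "r < n" and "percolating (Kpow n (Suc m)) (star r) E0"
  shows "card (seed_triples r m) \<le> card E0"
proof -
  have "card (seed_edge ` seed_triples r m) \<le> card E0"
  proof (rule fun_vs.card_le_percolating_set[OF assms(3) finite_edges_Kpow])
    show "witness (Suc m) r e \<in> fun_vs.span (witness (Suc m) r ` (C - {e}))"
      if "C \<in> copies (Kpow n (Suc m)) (star r)" "e \<in> C" for C e
      using witness_in_span_star[OF assms(1) that] .
    show "seed_edge ` seed_triples r m \<subseteq> edges (Kpow n (Suc m))"
      using seed_edges_subset_edges[OF assms(2)] .
    show "inj_on (witness (Suc m) r) (seed_edge ` seed_triples r m)"
      using seed_witnesses_independent(1) by (rule inj_on_imageI)
    show "fun_vs.independent (witness (Suc m) r ` seed_edge ` seed_triples r m)"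
      using seed_witnesses_independent(2) by (simp add: image_comp)
  qed
  then show ?thesis
    using inj_on_seed_edge by (simp add: card_image)
qed

section \<open>The seed edges percolate\<close>

definition lower_neighbours :: "nat list \<Rightarrow> nat list set" where
  "lower_neighbours x = (\<lambda>(j, v). x[j := v]) ` (SIGMA j:{..<length x}. {..<x ! j})"

lemma finite_lower_neighbours: "finite (lower_neighbours x)"
  by (simp add: lower_neighbours_def)

lemma card_lower_neighbours: "card (lower_neighbours x) = sum_list x"
proof -
  have "inj_on (\<lambda>(j, v). x[j := v]) (SIGMA j:{..<length x}. {..<x ! j})"
  proof (rule inj_onI, clarify)
    fix j v j' v'
    assume j: "j < length x" "v < x ! j" and j': "j' < length x" "v' < x ! j'"
      and eq: "x[j := v] = x[j' := v']"
    have "j = j'"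
    proof (rule ccontr)
      assume "j \<noteq> j'"
      then have "v = x ! j" using arg_cong[OF eq, of "\<lambda>u. u ! j"] j by simp
      then show False using j by simp
    qed
    then show "j = j' \<and> v = v'" using arg_cong[OF eq, of "\<lambda>u. u ! j"] j by simp
  qed
  then have "card (lower_neighbours x) = (\<Sum>j<length x. x ! j)"
    unfolding lower_neighbours_def by (simp add: card_image)
  then show ?thesis by (simp add: sum_list_sum_nth atLeast0LessThan)
qed

lemma sum_list_update_less:
  fixes x :: "nat list"
  shows "i < length x \<Longrightarrow> v < x ! i \<Longrightarrow> sum_list (x[i := v]) < sum_list x"
  by (induction x arbitrary: i) (auto split: nat.splits)

lemma lower_neighbour_edge:
  assumes "x \<in> verts (Kpow n d)" and "w \<in> lower_neighbours x"
  shows "{x, w} \<in> edges (Kpow n d)" and "sum_list w < sum_list x"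
proof -
  obtain j v where jv: "j < length x" "v < x ! j" "w = x[j := v]"
    using assms(2) by (auto simp: lower_neighbours_def)
  have "w \<in> verts (Kpow n d)"
    using assms(1) jv by (auto simp: mem_verts_Kpow nth_list_update)
  then show "{x, w} \<in> edges (Kpow n d)"
    using assms(1) jv unfolding Kpow_edge_iff
    by (intro conjI exI[of _ j]) (auto simp: mem_verts_Kpow nth_list_update)
  show "sum_list w < sum_list x"
    using sum_list_update_less jv by simp
qed

lemma lower_or_seed_neighbours:
  assumes "x \<in> verts (Kpow n (Suc m))"
  obtains N where "finite N" and "r \<le> card N"
    and "N \<subseteq> lower_neighbours x \<union> {w. {x, w} \<in> seed_edge ` seed_triples r m}"
proof (cases "r \<le> sum_list x")
  case True
  then show ?thesis
    using that[of "lower_neighbours x"] by (simp add: finite_lower_neighbours card_lower_neighbours)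
next
  case False
  obtain a z where xz: "x = a # z" and "length z = m"
    using assms by (cases x) (auto simp: mem_verts_Kpow)
  define U where "U = (\<lambda>b. b # z) ` {a<..r - sum_list z}"
  have "U \<subseteq> {w. {x, w} \<in> seed_edge ` seed_triples r m}"
  proof
    fix w assume "w \<in> U"
    then obtain b where "a < b" "b \<le> r - sum_list z" "w = b # z" by (auto simp: U_def)
    then have "(a, b, z) \<in> seed_triples r m" and "{x, w} = seed_edge (a, b, z)"
      using \<open>length z = m\<close> False xz by (auto simp: seed_triples_def seed_edge_def)
    then show "w \<in> {w. {x, w} \<in> seed_edge ` seed_triples r m}" by auto
  qed
  moreover have "card U = r - sum_list z - a"
    unfolding U_def by (subst card_image) (auto simp: inj_on_def)
  moreover have "lower_neighbours x \<inter> U = {}"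
  proof -
    have "hd w \<le> a" if "w \<in> lower_neighbours x" for w
      using that xz by (auto simp: lower_neighbours_def nth_Cons split: nat.splits)
    moreover have "a < hd w" if "w \<in> U" for w
      using that by (auto simp: U_def)
    ultimately show ?thesis by fastforce
  qed
  moreover have "finite U" by (simp add: U_def)
  ultimately show ?thesis
    using that[of "lower_neighbours x \<union> U"] False xz
    by (auto simp: card_Un_disjoint finite_lower_neighbours card_lower_neighbours)
qed

lemma seed_edges_boot_closure:
  assumes "r < n" and "{x, y} \<in> edges (Kpow n (Suc m))"
  shows "{x, y} \<in> boot_closure (Kpow n (Suc m)) (star r) (seed_edge ` seed_triples r m)"
  using assms(2)
proof (induction "sum_list x" arbitrary: x y rule: less_induct)
  case less
  let ?G = "Kpow n (Suc m)" and ?E0 = "seed_edge ` seed_triples r m"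
  let ?Cl = "boot_closure ?G (star r) ?E0"
  have x: "x \<in> verts ?G" using less.prems by (rule Kpow_adjE)
  have lower: "{x, w} \<in> ?Cl" if w: "w \<in> lower_neighbours x" for w
  proof -
    have "{w, x} \<in> edges ?G"
      using lower_neighbour_edge(1)[OF x w] by (simp add: insert_commute)
    then have "{w, x} \<in> ?Cl"
      using less.hyps lower_neighbour_edge(2)[OF x w] by blast
    then show ?thesis by (simp add: insert_commute)
  qed
  obtain N where N: "finite N" "r \<le> card N" "N \<subseteq> lower_neighbours x \<union> {w. {x, w} \<in> ?E0}"
    using lower_or_seed_neighbours[OF x] .
  have "{x, w} \<in> ?Cl" if "w \<in> N" for w
  proof (cases "w \<in> lower_neighbours x")
    case True
    then show ?thesis by (rule lower)
  next
    case False
    then have "{x, w} \<in> ?E0" using N(3) that by blast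
    then show ?thesis using subset_boot_closure[of ?E0 ?G "star r"] by blast
  qed
  then show ?case
    using boot_closure_star_step[OF simple_graph_Kpow seed_edges_subset_edges[OF assms(1)] less.prems N(1,2)]
    by blast
qed

lemma percolating_seed_edges:
  assumes "r < n"
  shows "percolating (Kpow n (Suc m)) (star r) (seed_edge ` seed_triples r m)"
proof -
  have E0: "seed_edge ` seed_triples r m \<subseteq> edges (Kpow n (Suc m))"
    using seed_edges_subset_edges[OF assms] .
  moreover have "edges (Kpow n (Suc m)) \<subseteq> boot_closure (Kpow n (Suc m)) (star r) (seed_edge ` seed_triples r m)"
    using seed_edges_boot_closure[OF assms] by (metis Kpow_edgeE subsetI)
  ultimately show ?thesis
    unfolding percolating_iff_boot_closure using boot_closure_subset_edges[OF E0] by blast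
qed

section \<open>Counting the seed edges\<close>

definition bounded_sum_lists :: "nat \<Rightarrow> nat \<Rightarrow> nat list set" where
  "bounded_sum_lists k s = {u. length u = k \<and> sum_list u \<le> s}"

lemma bounded_sum_lists_Suc:
  "bounded_sum_lists (Suc k) s = (\<Union>h\<le>s. (\<lambda>u. h # u) ` bounded_sum_lists k (s - h))"
proof (intro set_eqI iffI)
  fix u assume "u \<in> bounded_sum_lists (Suc k) s"
  then obtain h w where "u = h # w" "length w = k" "h + sum_list w \<le> s"
    by (cases u) (auto simp: bounded_sum_lists_def)
  then have "h \<in> {..s}" "w \<in> bounded_sum_lists k (s - h)"
    by (auto simp: bounded_sum_lists_def)
  then show "u \<in> (\<Union>h\<le>s. (\<lambda>u. h # u) ` bounded_sum_lists k (s - h))"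
    using \<open>u = h # w\<close> by blast
qed (auto simp: bounded_sum_lists_def)

lemma finite_bounded_sum_lists: "finite (bounded_sum_lists k s)"
proof -
  have "bounded_sum_lists k s \<subseteq> {u. set u \<subseteq> {..s} \<and> length u = k}"
    using member_le_sum_list by (fastforce simp: bounded_sum_lists_def)
  then show ?thesis by (rule finite_subset) (rule finite_lists_length_eq, simp)
qed

lemma card_bounded_sum_lists: "card (bounded_sum_lists k s) = (k + s) choose k"
proof (induction k arbitrary: s)
  case 0
  have "bounded_sum_lists 0 s = {[]}" by (auto simp: bounded_sum_lists_def)
  then show ?case by simp
next
  case (Suc k)
  have "card (bounded_sum_lists (Suc k) s) = (\<Sum>h\<le>s. card ((\<lambda>u. h # u) ` bounded_sum_lists k (s - h)))"
    unfolding bounded_sum_lists_Suc by (rule card_UN_disjoint) (auto simp: finite_bounded_sum_lists)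
  also have "\<dots> = (\<Sum>h\<le>s. (k + (s - h)) choose k)"
    by (simp add: card_image Suc.IH)
  also have "\<dots> = (\<Sum>j\<le>s. (k + j) choose k)"
    by (rule sum.reindex_bij_witness[of _ "\<lambda>j. s - j" "\<lambda>j. s - j"]) auto
  also have "\<dots> = (k + s + 1) choose (k + 1)"
    by (rule choose_rising_sum(1))
  finally show ?case by simp
qed

lemma card_seed_triples:
  assumes "0 < r"
  shows "card (seed_triples r m) = (Suc m + r) choose (Suc (Suc m))"
proof -
  \<comment> \<open>\<open>a < b\<close> and \<open>b + \<Sum>z \<le> r\<close> say exactly that \<open>a + (b - a - 1) + \<Sum>z \<le> r - 1\<close>\<close>
  have "bij_betw (\<lambda>(a, b, z). a # (b - a - 1) # z) (seed_triples r m) (bounded_sum_lists (Suc (Suc m)) (r - 1))"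
    by (rule bij_betw_byWitness[where f' = "\<lambda>u. (u ! 0, u ! 0 + u ! 1 + 1, drop 2 u)"])
      (use assms in \<open>auto simp: seed_triples_def bounded_sum_lists_def length_Suc_conv\<close>)
  then have "card (seed_triples r m) = card (bounded_sum_lists (Suc (Suc m)) (r - 1))"
    by (rule bij_betw_same_card)
  also have "\<dots> = (Suc m + r) choose (Suc (Suc m))"
    using assms by (simp add: card_bounded_sum_lists)
  finally show ?thesis .
qed

theorem theorem3p6:
  fixes n r d :: nat
  assumes "0 < n" and "0 < r" and "0 < d" and "n \<ge> r + 1"
  shows "m_e (Kpow n d) r = (d + r) choose (d + 1)"
proof -
  obtain m where d: "d = Suc m" using \<open>0 < d\<close> by (cases d) auto
  have "r < n" using \<open>n \<ge> r + 1\<close> by simp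
  have "wsat (Kpow n d) (star r) = card (seed_edge ` seed_triples r m)"
    unfolding d using percolating_seed_edges[OF \<open>r < n\<close>]
  proof (rule wsat_eqI)
    show "card (seed_edge ` seed_triples r m) \<le> card E"
      if "percolating (Kpow n (Suc m)) (star r) E" for E
      using card_seed_triples_le_percolating[OF \<open>0 < r\<close> \<open>r < n\<close> that]
      by (simp add: card_image[OF inj_on_seed_edge])
  qed
  also have "\<dots> = (d + r) choose (d + 1)"
    using card_seed_triples[OF \<open>0 < r\<close>] by (simp add: card_image[OF inj_on_seed_edge] d)
  finally show ?thesis by (simp add: m_e_def)
qed

end
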